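(* Let $E=\mathbb{R}^d$, $n\ge2$, $m_1,\dots,m_n>0$, $X=E^n\smallsetminus\Delta$, and let $U\colon X\to\mathbb{R}$ be smooth, homogeneous of degree $-\alpha$ ($\alpha>0$), invariant under all isometries of $E$ acting diagonally (in particular under $SO(d)$ acting diagonally), with $U(\mathbf{q})>0$ for all $\mathbf{q}\in X$. Let $F(\mathbf{q})=-\nabla_MU(\mathbf{q})/\lVert\nabla_MU(\mathbf{q})\rVert_M$ for $\mathbf{q}\in S$, with components $F(\mathbf{q})=(F_1(\mathbf{q}),\dots,F_n(\mathbf{q}))$, and assume $F$ satisfies: for every orthogonal projection $p\colon E\to\eta$ onto a $2$-dimensional linear subspace $\eta\subset E$ and every $\mathbf{q}\in S$ there exists $j\in\{1,\dots,n\}$ with $p(F_j(\mathbf{q}))\cdot p(\mathbf{q}_j)\ge0$, and if moreover $p(\mathbf{q}_i)\ne0$ for some $i$, then such a $j$ can be chosen with $p(\mathbf{q}_j)\neq0$. Let $\pi$ denote the quotient map by the diagonal $SO(d)$-action and $\bar F\colon S/SO(d)\to \hat S/SO(d)$ the induced map $\bar F(\pi(\mathbf{q}))=\pi(F(\mathbf{q}))$. Then \[ \pi(\operatorname{Fix}(F))=\operatorname{Fix}(\bar F), \] where $\operatorname{Fix}(\bar F)=\{\pi(\mathbf{q}):\mathbf{q}\in S,\ \bar F(\pi(\mathbf{q}))=\pi(\mathbf{q})\}$.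
   Context: $\Delta=\bigcup_{i<j}\{\mathbf{q}_i=\mathbf{q}_j\}$. Mass metric $\langle\mathbf{v},\mathbf{w}\rangle_M=\sum_jm_j\mathbf{v}_j\cdot\mathbf{w}_j$; $(\nabla_MU)_j=m_j^{-1}\partial U/\partial\mathbf{q}_j$. $V=\{\mathbf{q}\in E^n:\sum_jm_j\mathbf{q}_j=0\}$, $Y=V\cap X$, $S=\{\mathbf{q}\in Y:\lVert\mathbf{q}\rVert_M=1\}$, $\hat S=\{\mathbf{v}\in V:\lVert\mathbf{v}\rVert_M=1\}$; $F\colon S\to\hat S$. $SO(d)$ acts diagonally: $g\mathbf{q}=(g\mathbf{q}_1,\dots,g\mathbf{q}_n)$. Fixed points of $F$ are exactly the central configurations in $S$. *)

theory Defs
  imports "HOL-Analysis.Analysis"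
begin

text \<open>Bodies are indexed by a finite type 'n, positions lie in E = real^'d.
  A configuration is q :: (real^'d)^'n, with q $ j the position of body j.\<close>

text \<open>C-infinity on an open set S (real-valued): there is a family of all
  iterated derivatives G vs (vs = list of directions), G [] = f on S,
  and each G vs is differentiable at every point of S with derivative h \<mapsto> G (h # vs).\<close>
definition smooth_on :: "'a::real_normed_vector set \<Rightarrow> ('a \<Rightarrow> real) \<Rightarrow> bool" where
  "smooth_on S f \<longleftrightarrow> open S \<and> (\<exists>G :: 'a list \<Rightarrow> 'a \<Rightarrow> real.
      (\<forall>x\<in>S. G [] x = f x) \<and>
      (\<forall>vs. \<forall>x\<in>S. (G vs has_derivative (\<lambda>h. G (h # vs) x)) (at x)))"

definition Xset :: "((real^'d)^'n) set" where
  "Xset = {q. \<forall>i j. i \<noteq> j \<longrightarrow> q $ i \<noteq> q $ j}"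

definition inner_M :: "('n::finite \<Rightarrow> real) \<Rightarrow> (real^'d)^'n \<Rightarrow> (real^'d)^'n \<Rightarrow> real" where
  "inner_M m v w = (\<Sum>j\<in>UNIV. m j * (v $ j \<bullet> w $ j))"

definition norm_M :: "('n::finite \<Rightarrow> real) \<Rightarrow> (real^'d)^'n \<Rightarrow> real" where
  "norm_M m v = sqrt (inner_M m v v)"

definition Vset :: "('n::finite \<Rightarrow> real) \<Rightarrow> ((real^'d)^'n) set" where
  "Vset m = {q. (\<Sum>j\<in>UNIV. m j *\<^sub>R q $ j) = 0}"

definition Sset :: "('n::finite \<Rightarrow> real) \<Rightarrow> ((real^'d)^'n) set" where
  "Sset m = {q \<in> Vset m \<inter> Xset. norm_M m q = 1}"

definition Shat :: "('n::finite \<Rightarrow> real) \<Rightarrow> ((real^'d)^'n) set" where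
  "Shat m = {v \<in> Vset m. norm_M m v = 1}"

definition egrad :: "((real^'d)^'n \<Rightarrow> real) \<Rightarrow> (real^'d)^'n \<Rightarrow> (real^'d)^'n" where
  "egrad U q = (THE g. (U has_derivative (\<lambda>h. g \<bullet> h)) (at q))"

definition grad_M :: "('n::finite \<Rightarrow> real) \<Rightarrow> ((real^'d)^'n \<Rightarrow> real) \<Rightarrow> (real^'d)^'n \<Rightarrow> (real^'d)^'n" where
  "grad_M m U q = (\<chi> j. (1 / m j) *\<^sub>R (egrad U q $ j))"

definition Fmap :: "('n::finite \<Rightarrow> real) \<Rightarrow> ((real^'d)^'n \<Rightarrow> real) \<Rightarrow> (real^'d)^'n \<Rightarrow> (real^'d)^'n" where
  "Fmap m U q = - ((1 / norm_M m (grad_M m U q)) *\<^sub>R grad_M m U q)"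

definition SOd :: "(real^'d^'d) set" where
  "SOd = {A. orthogonal_matrix A \<and> det A = 1}"

definition act :: "real^'d^'d \<Rightarrow> (real^'d)^'n \<Rightarrow> (real^'d)^'n" where
  "act A q = (\<chi> j. A *v (q $ j))"

text \<open>Quotient map pi: a configuration goes to its SO(d)-orbit.\<close>
definition orbit_SO :: "(real^'d)^'n \<Rightarrow> ((real^'d)^'n) set" where
  "orbit_SO q = {act A q | A. A \<in> SOd}"

definition orth_proj2 :: "(real^'d \<Rightarrow> real^'d) \<Rightarrow> bool" where
  "orth_proj2 p \<longleftrightarrow> linear p \<and> (\<forall>x. p (p x) = p x) \<and> (\<forall>x y. p x \<bullet> y = x \<bullet> p y)
     \<and> dim (range p) = 2"

end

theory Submission
  imports Defs
begin

text \<open>If the orbit of \<open>q\<close> is fixed by the induced map, then \<open>F(q) = A q\<close> for a rotation \<open>A\<close>.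
  Rotational invariance of \<open>U\<close> makes the angular momentum of the gradient vanish, which says
  that \<open>A I\<close> is self-adjoint, where \<open>I x = \<Sum>\<^sub>j m\<^sub>j (q\<^sub>j \<bullet> x) q\<^sub>j\<close> is the inertia operator of \<open>q\<close>.
  Since \<open>(A I)\<^sup>2 = I\<^sup>2\<close>, uniqueness of positive square roots shows that either \<open>A I = I\<close>, and then
  comparing traces gives \<open>A q\<^sub>j = q\<^sub>j\<close>, i.e. \<open>F(q) = q\<close>; or \<open>A\<close> reverses an eigenvector \<open>e\<close> of
  \<open>I\<close>. Repeating the argument for \<open>A\<close> composed with the reflection in \<open>e\<^sup>\<bottom>\<close> shows that \<open>A\<close>
  then reverses a second direction orthogonal to \<open>e\<close>, or acts on \<open>e\<close> and all \<open>q\<^sub>j\<close> as that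
  reflection. A reversed plane, or the plane spanned by \<open>e\<close> and a vector orthogonal to \<open>e\<close> and
  all \<open>q\<^sub>j\<close>, violates the projection condition on \<open>F\<close>; if there is no such vector, \<open>A\<close> is a
  reflection of \<open>E\<close> and has determinant \<open>-1\<close>.\<close>

lemma selfadjoint_psd_form_zero_imp_zero:
  fixes B :: "'a::real_inner \<Rightarrow> 'a"
  assumes lin: "linear B" and sa: "\<And>x y. B x \<bullet> y = x \<bullet> B y"
    and psd: "\<And>y. 0 \<le> y \<bullet> B y" and e0: "e \<bullet> B e = 0"
  shows "B e = 0"
proof (rule ccontr)
  assume nz: "B e \<noteq> 0"
  define z where "z = B e"
  define s where "s = z \<bullet> z"
  define K where "K = z \<bullet> B z"
  have spos: "s > 0" using nz by (simp add: s_def z_def)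
  have K0: "K \<ge> 0" using psd by (simp add: K_def)
  have expand: "(e + t *\<^sub>R z) \<bullet> B (e + t *\<^sub>R z) = 2 * t * s + t\<^sup>2 * K" for t
  proof -
    have "B (e + t *\<^sub>R z) = B e + t *\<^sub>R B z" using lin by (simp add: linear_add linear_scale)
    moreover have "e \<bullet> B z = s" using sa[of e z] by (simp add: s_def z_def inner_commute)
    ultimately show ?thesis
      using e0 by (simp add: inner_add_left inner_add_right s_def z_def K_def power2_eq_square
          algebra_simps inner_commute)
  qed
  \<comment> \<open>a small negative step along \<open>B e\<close> makes the form negative\<close>
  define t where "t = - s / (K + 1)"
  have tneg: "t < 0" using spos K0 by (simp add: t_def)
  have "t * K > - s"
  proof -
    have "t * K = - s * (K / (K + 1))" by (simp add: t_def)
    moreover have "s * (K / (K + 1)) < s * 1" using spos K0 by (intro mult_strict_left_mono) auto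
    ultimately show ?thesis by simp
  qed
  hence "t * (2 * s + t * K) < 0" using spos tneg by (simp add: mult_neg_pos)
  moreover have "0 \<le> 2 * t * s + t\<^sup>2 * K" using psd[of "e + t *\<^sub>R z"] expand[of t] by simp
  ultimately show False by (simp add: power2_eq_square algebra_simps)
qed

lemma selfadjoint_max_eigenvector:
  fixes M :: "'a::euclidean_space \<Rightarrow> 'a"
  assumes lin: "linear M" and sa: "\<And>x y. M x \<bullet> y = x \<bullet> M y"
  obtains e where "norm e = 1" "\<And>y. y \<bullet> M y \<le> (e \<bullet> M e) * (norm y)\<^sup>2"
    "M e = (e \<bullet> M e) *\<^sub>R e"
proof -
  have cont: "continuous_on (sphere 0 1) (\<lambda>x. x \<bullet> M x)"
    using lin by (intro continuous_intros linear_continuous_on) (simp add: linear_conv_bounded_linear)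
  obtain e where e: "e \<in> sphere 0 1" and emax: "\<And>y. y \<in> sphere 0 1 \<Longrightarrow> y \<bullet> M y \<le> e \<bullet> M e"
    using continuous_attains_sup[OF compact_sphere _ cont] by auto
  define \<mu> where "\<mu> = e \<bullet> M e"
  have bound: "y \<bullet> M y \<le> \<mu> * (norm y)\<^sup>2" for y
  proof (cases "y = 0")
    case True then show ?thesis using lin by (simp add: linear_0)
  next
    case False
    define u where "u = (1 / norm y) *\<^sub>R y"
    have "u \<in> sphere 0 1" using False by (simp add: u_def)
    hence "u \<bullet> M u \<le> \<mu>" using emax \<mu>_def by blast
    moreover have "u \<bullet> M u = (y \<bullet> M y) / (norm y)\<^sup>2"
      using lin by (simp add: u_def linear_scale power2_eq_square)
    ultimately show ?thesis using False by (simp add: divide_le_eq mult.commute)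
  qed
  define B where "B x = \<mu> *\<^sub>R x - M x" for x
  have linB: "linear B"
    unfolding B_def by (rule linearI) (auto simp: linear_add[OF lin] linear_scale[OF lin] algebra_simps)
  have saB: "B x \<bullet> y = x \<bullet> B y" for x y
    using sa[of x y] by (simp add: B_def inner_diff_left inner_diff_right)
  have psdB: "0 \<le> y \<bullet> B y" for y
    using bound[of y] by (simp add: B_def inner_diff_right power2_norm_eq_inner)
  have ne1: "norm e = 1" using e by simp
  hence "e \<bullet> B e = 0" by (simp add: B_def inner_diff_right \<mu>_def power2_norm_eq_inner[symmetric])
  hence "B e = 0" using selfadjoint_psd_form_zero_imp_zero[OF linB saB psdB] by blast
  hence "M e = \<mu> *\<^sub>R e" by (simp add: B_def)
  then show ?thesis using that ne1 bound \<mu>_def by blast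
qed

lemma psd_eigenvector_of_square:
  fixes Q :: "'a::real_inner \<Rightarrow> 'a"
  assumes lin: "linear Q" and sa: "\<And>x y. Q x \<bullet> y = x \<bullet> Q y"
    and psd: "\<And>y. 0 \<le> y \<bullet> Q y" and mu: "\<mu> \<ge> 0" and eq: "Q (Q e) = \<mu>\<^sup>2 *\<^sub>R e"
  shows "Q e = \<mu> *\<^sub>R e"
proof (cases "\<mu> = 0")
  case True
  hence "Q e \<bullet> Q e = 0" using sa[of e "Q e"] eq by (simp add: inner_commute)
  thus ?thesis using True by simp
next
  case False
  hence mp: "\<mu> > 0" using mu by simp
  define z where "z = Q e - \<mu> *\<^sub>R e"
  have "Q z + \<mu> *\<^sub>R z = 0"
    using eq lin by (simp add: z_def linear_diff linear_scale algebra_simps power2_eq_square)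
  hence "z \<bullet> Q z + \<mu> * (z \<bullet> z) = 0"
    by (metis inner_add_right inner_scaleR_right inner_zero_right)
  hence "\<mu> * (z \<bullet> z) = 0" using psd[of z] mp by (smt (verit) inner_ge_zero mult_nonneg_nonneg)
  hence "z = 0" using mp by simp
  thus ?thesis by (simp add: z_def)
qed

lemma psd_sqrt_unique:
  fixes S Q :: "'a::euclidean_space \<Rightarrow> 'a"
  assumes linS: "linear S" and saS: "\<And>x y. S x \<bullet> y = x \<bullet> S y" and psdS: "\<And>y. 0 \<le> y \<bullet> S y"
    and linQ: "linear Q" and saQ: "\<And>x y. Q x \<bullet> y = x \<bullet> Q y" and psdQ: "\<And>y. 0 \<le> y \<bullet> Q y"
    and sq: "\<And>x. S (S x) = Q (Q x)"
  shows "S x = Q x"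
proof -
  define D where "D x = Q x - S x" for x
  have linD: "linear D"
    unfolding D_def by (rule linearI) (auto simp: linear_add[OF linQ] linear_add[OF linS]
        linear_scale[OF linQ] linear_scale[OF linS] algebra_simps)
  have saD: "D x \<bullet> y = x \<bullet> D y" for x y
    using saS[of x y] saQ[of x y] by (simp add: D_def inner_diff_left inner_diff_right)
  have eigenvalue_zero: "\<delta> = 0" if ev: "D x = \<delta> *\<^sub>R x" and x0: "x \<noteq> 0" for x \<delta>
  proof -
    have Qx: "Q x = S x + \<delta> *\<^sub>R x" using ev by (simp add: D_def algebra_simps)
    have "Q (Q x) = Q (S x) + \<delta> *\<^sub>R Q x" using Qx linQ by (simp add: linear_add linear_scale)
    hence "D (S x) + \<delta> *\<^sub>R S x + (\<delta> * \<delta>) *\<^sub>R x = 0" using sq[of x] Qx by (simp add: D_def algebra_simps)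
    hence "(D (S x) + \<delta> *\<^sub>R S x + (\<delta> * \<delta>) *\<^sub>R x) \<bullet> x = 0" by simp
    moreover have "D (S x) \<bullet> x = \<delta> * (S x \<bullet> x)" using saD[of "S x" x] ev by simp
    ultimately have "\<delta> * (2 * (x \<bullet> S x) + \<delta> * (x \<bullet> x)) = 0"
      by (simp add: inner_add_left inner_commute algebra_simps)
    moreover have "x \<bullet> S x \<ge> 0" using psdS by simp
    moreover have "x \<bullet> S x + \<delta> * (x \<bullet> x) \<ge> 0" using psdQ[of x] Qx by (simp add: inner_add_right)
    moreover have "x \<bullet> x > 0" using x0 by simp
    ultimately show ?thesis by (smt (verit) mult_eq_0_iff mult_pos_pos)
  qed
  have form_zero: "y \<bullet> D y = 0" for y
  proof -
    obtain e1 where e1: "norm e1 = 1" "\<And>y. y \<bullet> D y \<le> (e1 \<bullet> D e1) * (norm y)\<^sup>2"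
        "D e1 = (e1 \<bullet> D e1) *\<^sub>R e1"
      using selfadjoint_max_eigenvector[OF linD saD] by blast
    have "e1 \<bullet> D e1 = 0" using eigenvalue_zero[OF e1(3)] e1(1) by (metis norm_zero zero_neq_one)
    hence "y \<bullet> D y \<le> 0" using e1(2)[of y] by simp
    moreover
    have linN: "linear (\<lambda>x. - D x)" using linD by (rule linear_compose_neg)
    obtain e2 where e2: "norm e2 = 1" "\<And>y. y \<bullet> - D y \<le> (e2 \<bullet> - D e2) * (norm y)\<^sup>2"
        "- D e2 = (e2 \<bullet> - D e2) *\<^sub>R e2"
      using selfadjoint_max_eigenvector[OF linN] saD by (metis inner_minus_left inner_minus_right)
    have "D e2 = (- (e2 \<bullet> - D e2)) *\<^sub>R e2" using e2(3) by (metis minus_minus scaleR_minus_left)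
    hence "e2 \<bullet> - D e2 = 0" using eigenvalue_zero e2(1) by fastforce
    hence "y \<bullet> D y \<ge> 0" using e2(2)[of y] by simp
    ultimately show ?thesis by simp
  qed
  have "D x = 0"
    using selfadjoint_psd_form_zero_imp_zero[OF linD saD] form_zero by simp
  thus ?thesis by (simp add: D_def)
qed

lemma orthogonal_psd_selfadjoint_product_cases:
  fixes B Q :: "'a::euclidean_space \<Rightarrow> 'a"
  assumes ortB: "orthogonal_transformation B"
    and linQ: "linear Q" and saQ: "\<And>x y. Q x \<bullet> y = x \<bullet> Q y" and psdQ: "\<And>y. 0 \<le> y \<bullet> Q y"
    and saBQ: "\<And>x y. B (Q x) \<bullet> y = x \<bullet> B (Q y)"
  shows "(\<forall>x. B (Q x) = Q x) \<or> (\<exists>e \<mu>. norm e = 1 \<and> \<mu> > 0 \<and> B e = - e \<and> Q e = \<mu> *\<^sub>R e)"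
proof -
  have linB: "linear B" and ipB: "\<And>v w. B v \<bullet> B w = v \<bullet> w"
    using ortB by (auto simp: orthogonal_transformation_def)
  define S where "S x = B (Q x)" for x
  have linS: "linear S" unfolding S_def using linear_compose[OF linQ linB] by (simp add: o_def)
  have saS: "S x \<bullet> y = x \<bullet> S y" for x y unfolding S_def by (rule saBQ)
  have sq: "S (S x) = Q (Q x)" for x
  proof (rule vector_eq_rdot[THEN iffD1], rule allI)
    fix y
    have "S (S x) \<bullet> y = S x \<bullet> S y" using saS[of "S x" y] by simp
    also have "\<dots> = Q x \<bullet> Q y" by (simp add: S_def ipB)
    also have "\<dots> = Q (Q x) \<bullet> y" using saQ[of "Q x" y] by simp
    finally show "S (S x) \<bullet> y = Q (Q x) \<bullet> y" .
  qed
  show ?thesis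
  proof (cases "\<forall>y. 0 \<le> y \<bullet> S y")
    case True
    then have "S x = Q x" for x by (intro psd_sqrt_unique[OF linS saS _ linQ saQ psdQ sq]) blast
    thus ?thesis by (simp add: S_def)
  next
    case False
    then obtain y0 where y0: "y0 \<bullet> S y0 < 0" by (meson not_le)
    have linN: "linear (\<lambda>x. - S x)" using linS by (rule linear_compose_neg)
    obtain e where e: "norm e = 1" "\<And>y. y \<bullet> - S y \<le> (e \<bullet> - S e) * (norm y)\<^sup>2"
        "- S e = (e \<bullet> - S e) *\<^sub>R e"
      using selfadjoint_max_eigenvector[OF linN] saS by (metis inner_minus_left inner_minus_right)
    define \<nu> where "\<nu> = e \<bullet> - S e"
    have "0 < \<nu> * (norm y0)\<^sup>2" using e(2)[of y0] y0 unfolding \<nu>_def by simp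
    hence \<nu>pos: "\<nu> > 0" by (simp add: zero_less_mult_iff)
    have Se: "S e = (- \<nu>) *\<^sub>R e" using e(3) unfolding \<nu>_def by (metis minus_minus scaleR_minus_left)
    have "Q (Q e) = S (S e)" by (rule sq[symmetric])
    also have "\<dots> = (- \<nu>) *\<^sub>R S e" by (subst Se) (rule linear_scale[OF linS])
    also have "\<dots> = \<nu>\<^sup>2 *\<^sub>R e" by (simp add: Se power2_eq_square)
    finally have "Q (Q e) = \<nu>\<^sup>2 *\<^sub>R e" .
    hence Qe: "Q e = \<nu> *\<^sub>R e"
      using psd_eigenvector_of_square[OF linQ saQ psdQ, of \<nu>] \<nu>pos by simp
    have "\<nu> *\<^sub>R B e = \<nu> *\<^sub>R (- e)"
      using Se Qe linear_scale[OF linB] by (simp add: S_def)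
    hence "B e = - e" using \<nu>pos by (metis scaleR_cancel_left less_irrefl)
    thus ?thesis using e(1) \<nu>pos Qe by blast
  qed
qed

definition inertia :: "('n::finite \<Rightarrow> real) \<Rightarrow> ('n \<Rightarrow> 'a::real_inner) \<Rightarrow> 'a \<Rightarrow> 'a" where
  "inertia m v x = (\<Sum>j\<in>UNIV. (m j * (v j \<bullet> x)) *\<^sub>R v j)"

lemma inner_inertia_left: "inertia m v x \<bullet> y = (\<Sum>j\<in>UNIV. m j * (v j \<bullet> x) * (v j \<bullet> y))"
  by (simp add: inertia_def inner_sum_left)

lemma linear_inertia: "linear (inertia m v)"
  unfolding inertia_def
  by (rule linearI) (auto simp: inner_add_right scaleR_add_left sum.distrib scaleR_sum_right algebra_simps)

lemma inertia_selfadjoint: "inertia m v x \<bullet> y = x \<bullet> inertia m v y"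
  by (simp add: inner_inertia_left inner_commute[of x] mult.commute mult.left_commute)

lemma inertia_psd:
  assumes "\<And>j. m j > 0"
  shows "0 \<le> y \<bullet> inertia m v y"
proof -
  have "0 \<le> (\<Sum>j\<in>UNIV. m j * ((v j \<bullet> y) * (v j \<bullet> y)))"
    by (intro sum_nonneg) (metis assms less_imp_le mult_nonneg_nonneg zero_le_square)
  thus ?thesis by (simp add: inertia_selfadjoint[symmetric] inner_inertia_left mult.assoc)
qed

lemma orthogonal_transformation_fixing_inertia:
  fixes B :: "'a::euclidean_space \<Rightarrow> 'a" and v :: "'n::finite \<Rightarrow> 'a"
  assumes ortB: "orthogonal_transformation B" and mpos: "\<And>j. m j > 0"
    and fix_inertia: "\<And>x. B (inertia m v x) = inertia m v x"
  shows "B (v j) = v j"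
proof -
  have linB: "linear B" using ortB by (simp add: orthogonal_transformation_def)
  \<comment> \<open>compare the traces of \<open>B \<circ> inertia\<close> and \<open>inertia\<close>\<close>
  have "(\<Sum>b\<in>Basis. b \<bullet> B (inertia m v b)) = (\<Sum>b\<in>Basis. b \<bullet> inertia m v b)"
    using fix_inertia by simp
  hence "(\<Sum>b\<in>Basis. \<Sum>j\<in>UNIV. m j * ((v j \<bullet> b) * (B (v j) \<bullet> b)))
      = (\<Sum>b\<in>Basis. \<Sum>j\<in>UNIV. m j * ((v j \<bullet> b) * (v j \<bullet> b)))"
    by (simp add: inertia_def linear_sum[OF linB] linear_scale[OF linB] inner_sum_right
        inner_commute mult.assoc mult.left_commute)
  hence "(\<Sum>j\<in>UNIV. m j * (\<Sum>b\<in>Basis. (v j \<bullet> b) * (B (v j) \<bullet> b)))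
      = (\<Sum>j\<in>UNIV. m j * (\<Sum>b\<in>Basis. (v j \<bullet> b) * (v j \<bullet> b)))"
    by (simp add: sum_distrib_left sum.swap[of _ Basis])
  hence "(\<Sum>j\<in>UNIV. m j * (v j \<bullet> v j - v j \<bullet> B (v j))) = 0"
    by (simp add: euclidean_inner[symmetric] right_diff_distrib sum_subtractf)
  moreover have "v k \<bullet> B (v k) \<le> v k \<bullet> v k" for k
    using norm_cauchy_schwarz[of "v k" "B (v k)"] orthogonal_transformation_norm[OF ortB]
    by (simp add: power2_eq_square[symmetric] power2_norm_eq_inner)
  hence "0 \<le> m k * (v k \<bullet> v k - v k \<bullet> B (v k))" for k
    using mpos[of k] by simp
  ultimately have "m j * (v j \<bullet> v j - v j \<bullet> B (v j)) = 0"
    by (simp add: sum_nonneg_eq_0_iff)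
  hence "v j \<bullet> B (v j) = v j \<bullet> v j" using mpos[of j] by simp
  hence "(B (v j) - v j) \<bullet> (B (v j) - v j) = 0"
    using ortB unfolding orthogonal_transformation_def by (simp add: inner_diff_left inner_diff_right inner_commute)
  thus ?thesis by simp
qed

definition plane_proj :: "'a::real_inner \<Rightarrow> 'a \<Rightarrow> 'a \<Rightarrow> 'a" where
  "plane_proj e f x = (e \<bullet> x) *\<^sub>R e + (f \<bullet> x) *\<^sub>R f"

text \<open>The hypothesis of the theorem on \<open>F\<close>, for a configuration \<open>v\<close> with \<open>F(v) = B v\<close>,
  restricted to the planes spanned by orthonormal pairs \<open>e, f\<close>.\<close>
definition plane_nonreversing :: "('a::real_inner \<Rightarrow> 'a) \<Rightarrow> ('n \<Rightarrow> 'a) \<Rightarrow> bool" where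
  "plane_nonreversing B v \<longleftrightarrow> (\<forall>e f. norm e = 1 \<longrightarrow> norm f = 1 \<longrightarrow> e \<bullet> f = 0 \<longrightarrow>
     (\<exists>i. plane_proj e f (v i) \<noteq> 0) \<longrightarrow>
     (\<exists>j. 0 \<le> plane_proj e f (B (v j)) \<bullet> plane_proj e f (v j) \<and> plane_proj e f (v j) \<noteq> 0))"

lemma inner_plane_proj:
  assumes "norm e = 1" "norm f = 1" "e \<bullet> f = 0"
  shows "plane_proj e f a \<bullet> plane_proj e f b = (e \<bullet> a) * (e \<bullet> b) + (f \<bullet> a) * (f \<bullet> b)"
proof -
  have "e \<bullet> e = 1" "f \<bullet> f = 1" "f \<bullet> e = 0" using assms by (simp_all add: norm_eq_1 inner_commute)
  thus ?thesis using assms(3) by (simp add: plane_proj_def inner_add_left inner_add_right)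
qed

lemma orth_proj2_plane_proj:
  fixes e f :: "real^'d"
  assumes ne: "norm e = 1" and nf: "norm f = 1" and ef: "e \<bullet> f = 0"
  shows "orth_proj2 (plane_proj e f)"
proof -
  let ?p = "plane_proj e f"
  have ee: "e \<bullet> e = 1" and ff: "f \<bullet> f = 1" and fe: "f \<bullet> e = 0"
    using ne nf ef by (simp_all add: norm_eq_1 inner_commute)
  have lin: "linear ?p" unfolding plane_proj_def
    by (rule linearI) (auto simp: inner_add_right algebra_simps scaleR_add_left)
  have idem: "?p (?p x) = ?p x" for x
    by (simp add: plane_proj_def inner_add_right ee ff ef fe)
  have sa: "?p x \<bullet> y = x \<bullet> ?p y" for x y
    by (simp add: plane_proj_def inner_add_left inner_add_right inner_commute)
  have "range ?p = span {e, f}"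
  proof
    show "range ?p \<subseteq> span {e, f}"
      unfolding plane_proj_def by (intro image_subsetI span_add span_scale span_base) auto
    have "?p e = e" "?p f = f" by (simp_all add: plane_proj_def ee ff ef fe)
    hence "{e, f} \<subseteq> range ?p" by (metis empty_subsetI insert_subset rangeI)
    thus "span {e, f} \<subseteq> range ?p"
      using linear_subspace_image[OF lin subspace_UNIV] by (simp add: span_minimal)
  qed
  moreover have "independent {e, f}"
    using ef fe ne nf by (intro pairwise_orthogonal_independent) (auto simp: pairwise_def orthogonal_def)
  moreover have "e \<noteq> f" using ee ef by auto
  ultimately have "dim (range ?p) = 2" by (simp add: dim_eq_card_independent)
  thus ?thesis using lin idem sa unfolding orth_proj2_def by blast
qed

lemma not_plane_nonreversing:
  assumes ne: "norm e = 1" and nf: "norm f = 1" and ef: "e \<bullet> f = 0"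
    and ei: "e \<bullet> v i \<noteq> 0"
    and e_reversed: "\<And>j. e \<bullet> B (v j) = - (e \<bullet> v j)"
    and f_reversed: "\<And>j. (f \<bullet> B (v j)) * (f \<bullet> v j) \<le> - (f \<bullet> v j)\<^sup>2"
  shows "\<not> plane_nonreversing B v"
proof
  assume "plane_nonreversing B v"
  moreover have "e \<bullet> plane_proj e f (v i) = e \<bullet> v i"
    using ne ef by (simp add: plane_proj_def inner_add_right norm_eq_1)
  hence "plane_proj e f (v i) \<noteq> 0" using ei by auto
  ultimately obtain j where j: "0 \<le> plane_proj e f (B (v j)) \<bullet> plane_proj e f (v j)"
      and jn: "plane_proj e f (v j) \<noteq> 0"
    using ne nf ef unfolding plane_nonreversing_def by blast
  have "0 \<le> - (e \<bullet> v j)\<^sup>2 - (f \<bullet> v j)\<^sup>2"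
    using j e_reversed[of j] f_reversed[of j] inner_plane_proj[OF ne nf ef]
    by (simp add: power2_eq_square)
  hence "e \<bullet> v j = 0" "f \<bullet> v j = 0"
    by (smt (verit) zero_le_power2 power_zero_numeral zero_eq_power2)+
  thus False using jn by (simp add: plane_proj_def)
qed

lemma reflection_matrix_det:
  fixes A :: "real^'d^'d" and e :: "real^'d"
  assumes ne: "norm e = 1" and refl: "\<And>x. A *v x = x - (2 * (e \<bullet> x)) *\<^sub>R e"
  shows "det A = -1"
proof -
  obtain k :: 'd where True by simp
  obtain P where oP: "orthogonal_matrix P" and Pk: "P *v axis k 1 = e"
    using orthogonal_matrix_exists_basis[OF ne] by metis
  have PtP: "transpose P ** P = mat 1" using oP by (simp add: orthogonal_matrix_def)
  have Pte: "transpose P *v e = axis k 1"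
    using Pk PtP by (metis matrix_vector_mul_assoc matrix_vector_mul_lid)
  \<comment> \<open>in the orthonormal basis given by the columns of \<open>P\<close>, \<open>A\<close> negates the \<open>k\<close>-th coordinate\<close>
  define M :: "real^'d^'d" where "M = (\<chi> i. if i = k then (-1) *s (mat 1 $ i) else mat 1 $ i)"
  have "(transpose P ** A ** P) *v x = M *v x" for x
  proof -
    have "e \<bullet> (P *v x) = (transpose P *v e) \<bullet> x"
      by (metis dot_lmul_matrix inner_commute transpose_matrix_vector)
    hence ek: "e \<bullet> (P *v x) = x $ k" using Pte by (simp add: inner_axis')
    have "(transpose P ** A ** P) *v x = transpose P *v (A *v (P *v x))"
      by (simp add: matrix_vector_mul_assoc matrix_mul_assoc)
    also have "\<dots> = transpose P *v (P *v x) - (2 * (e \<bullet> (P *v x))) *\<^sub>R (transpose P *v e)"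
      by (simp only: refl matrix_vector_mult_diff_distrib matrix_vector_mult_scaleR)
    also have "\<dots> = x - (2 * x $ k) *\<^sub>R axis k 1"
      using PtP by (simp only: ek Pte matrix_vector_mul_assoc matrix_vector_mul_lid)
    finally have "(transpose P ** A ** P) *v x = x - (2 * x $ k) *\<^sub>R axis k 1" .
    moreover have "M *v x = x - (2 * x $ k) *\<^sub>R axis k 1"
      by (auto simp: vec_eq_iff M_def matrix_vector_mult_def mat_def axis_def mult_delta_left sum_negf)
    ultimately show ?thesis by simp
  qed
  hence "transpose P ** A ** P = M" by (simp add: matrix_eq)
  moreover have "det M = -1 * det ((\<chi> i. if i = k then mat 1 $ i else mat 1 $ i) :: real^'d^'d)"
    unfolding M_def by (rule det_row_mul)
  hence "det M = -1" by simp
  moreover have "det P * det P = 1"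
    using det_orthogonal_matrix[OF oP] by auto
  ultimately show ?thesis by (metis det_mul det_transpose mult.commute mult.left_commute mult_1)
qed

lemma orthogonal_transformation_inner_reversed:
  assumes "orthogonal_transformation B" and "B e = - e"
  shows "e \<bullet> B y = - (e \<bullet> y)"
proof -
  have "e \<bullet> B y = - (B e \<bullet> B y)" using assms(2) by simp
  also have "\<dots> = - (e \<bullet> y)" using assms(1) by (simp add: orthogonal_transformation_def)
  finally show ?thesis .
qed

lemma rotation_not_reflection_of_configuration:
  fixes A :: "real^'d^'d" and v :: "'n::finite \<Rightarrow> real^'d"
  assumes rotA: "rotation_matrix A" and nonrev: "plane_nonreversing ((*v) A) v"
    and ne: "norm e = 1" and ei: "e \<bullet> v i \<noteq> 0"
    and Ae: "A *v e = - e" and Av: "\<And>k. A *v v k = v k - (2 * (e \<bullet> v k)) *\<^sub>R e"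
  shows False
proof (cases "span (insert e (range v)) = UNIV")
  case True
  have "A *v x = x - (2 * (e \<bullet> x)) *\<^sub>R e" for x
  proof (rule linear_eq_on_span[of "(*v) A" "\<lambda>x. x - (2 * (e \<bullet> x)) *\<^sub>R e" "insert e (range v)"])
    show "linear ((*v) A)" by (rule matrix_vector_mul_linear)
    show "linear (\<lambda>x. x - (2 * (e \<bullet> x)) *\<^sub>R e)"
      by (rule linearI) (auto simp: inner_add_right algebra_simps scaleR_add_left)
    show "x \<in> span (insert e (range v))" using True by simp
    show "A *v y = y - (2 * (e \<bullet> y)) *\<^sub>R e" if "y \<in> insert e (range v)" for y
      using that Ae Av ne by (auto simp: norm_eq_1 scaleR_2)
  qed
  hence "det A = -1" by (rule reflection_matrix_det[OF ne])
  thus False using rotA by (simp add: rotation_matrix_def)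
next
  case False
  hence "dim (insert e (range v)) < DIM(real^'d)"
    using dim_eq_full dim_subset_UNIV le_neq_implies_less by blast
  then obtain f where f0: "f \<noteq> 0"
    and fo: "\<And>y. y \<in> span (insert e (range v)) \<Longrightarrow> orthogonal f y"
    using orthogonal_to_subspace_exists by blast
  define f' where "f' = (1 / norm f) *\<^sub>R f"
  have nf': "norm f' = 1" using f0 by (simp add: f'_def)
  have ef': "e \<bullet> f' = 0" using fo[of e] by (simp add: span_base orthogonal_def f'_def inner_commute)
  have f'v: "f' \<bullet> v k = 0" for k using fo[of "v k"] by (simp add: span_base orthogonal_def f'_def)
  have eAv: "e \<bullet> (A *v v k) = - (e \<bullet> v k)" for k
    using ne by (simp add: Av inner_diff_right norm_eq_1)
  have "\<not> plane_nonreversing ((*v) A) v"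
    by (rule not_plane_nonreversing[where B = "(*v) A" and v = v, OF ne nf' ef' ei eAv]) (simp add: f'v)
  thus False using nonrev by contradiction
qed

lemma rotation_no_reversed_inertia_axis:
  fixes A :: "real^'d^'d" and v :: "'n::finite \<Rightarrow> real^'d"
  assumes rotA: "rotation_matrix A" and mpos: "\<And>j. m j > 0"
    and saAI: "\<And>x y. (A *v inertia m v x) \<bullet> y = x \<bullet> (A *v inertia m v y)"
    and nonrev: "plane_nonreversing ((*v) A) v"
    and ne: "norm e = 1" and \<mu>pos: "\<mu> > 0" and Ae: "A *v e = - e" and Ie: "inertia m v e = \<mu> *\<^sub>R e"
  shows False
proof -
  have ortA: "orthogonal_transformation ((*v) A)"
    using rotA by (simp add: rotation_matrix_def orthogonal_transformation_matrix)
  have ee: "e \<bullet> e = 1" using ne by (simp add: norm_eq_1)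
  have "\<exists>i. e \<bullet> v i \<noteq> 0"
  proof (rule ccontr)
    assume "\<nexists>i. e \<bullet> v i \<noteq> 0"
    hence "inertia m v e = 0" by (simp add: inertia_def inner_commute)
    thus False using Ie \<mu>pos ne by auto
  qed
  then obtain i where ei: "e \<bullet> v i \<noteq> 0" by blast
  \<comment> \<open>composing with the reflection \<open>R\<close> along \<open>e\<close> keeps \<open>B \<circ> inertia\<close> self-adjoint and fixes \<open>e\<close>\<close>
  define R where "R x = x - (2 * (e \<bullet> x)) *\<^sub>R e" for x
  define B where "B x = A *v R x" for x
  have linR: "linear R"
    unfolding R_def by (rule linearI) (auto simp: inner_add_right algebra_simps scaleR_add_left)
  have ortB: "orthogonal_transformation B"
    unfolding orthogonal_transformation_def
  proof
    show "linear B" using linear_compose[OF linR matrix_vector_mul_linear] by (simp add: B_def[abs_def] o_def)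
    show "\<forall>x y. B x \<bullet> B y = x \<bullet> y"
      using ortA by (simp add: B_def R_def orthogonal_transformation_def inner_diff_left
          inner_diff_right ee inner_commute algebra_simps)
  qed
  have eI: "e \<bullet> inertia m v x = \<mu> * (e \<bullet> x)" for x using inertia_selfadjoint[of m v e x] Ie by simp
  have BI: "B (inertia m v x) = A *v inertia m v x + (2 * \<mu> * (e \<bullet> x)) *\<^sub>R e" for x
    by (simp add: B_def R_def matrix_vector_mult_diff_distrib matrix_vector_mult_scaleR Ae eI)
  have saBI: "B (inertia m v x) \<bullet> y = x \<bullet> B (inertia m v y)" for x y
    using saAI[of x y] by (simp add: BI inner_add_left inner_add_right inner_commute)
  have Be: "B e = e"
    using Ae linear_neg[OF matrix_vector_mul_linear, of A e] by (simp add: B_def R_def ee scaleR_2)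
  from orthogonal_psd_selfadjoint_product_cases[OF ortB linear_inertia inertia_selfadjoint
      inertia_psd[OF mpos] saBI]
  show False
  proof
    assume "\<forall>x. B (inertia m v x) = inertia m v x"
    hence "B (v k) = v k" for k
      by (intro orthogonal_transformation_fixing_inertia[where m = m and v = v, OF ortB mpos]) blast
    hence "A *v v k = v k - (2 * (e \<bullet> v k)) *\<^sub>R e" for k
      by (simp add: B_def R_def matrix_vector_mult_diff_distrib matrix_vector_mult_scaleR Ae eq_diff_eq)
    thus False by (rule rotation_not_reflection_of_configuration[OF rotA nonrev ne ei Ae])
  next
    assume "\<exists>e' \<mu>'. norm e' = 1 \<and> \<mu>' > 0 \<and> B e' = - e' \<and> inertia m v e' = \<mu>' *\<^sub>R e'"
    then obtain e' \<mu>' where ne': "norm e' = 1" and \<mu>'pos: "\<mu>' > 0" and Be': "B e' = - e'"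
      and Ie': "inertia m v e' = \<mu>' *\<^sub>R e'"
      by blast
    have linB: "linear B" using ortB by (simp add: orthogonal_transformation_def)
    \<comment> \<open>\<open>e\<close> and \<open>e'\<close> are eigenvectors of \<open>B \<circ> inertia\<close> for the eigenvalues \<open>\<mu>\<close> and \<open>-\<mu>'\<close>\<close>
    have "B (inertia m v e) \<bullet> e' = e \<bullet> B (inertia m v e')" by (rule saBI)
    hence "(\<mu> + \<mu>') * (e \<bullet> e') = 0"
      using Ie Ie' Be Be' linear_scale[OF linB] by (simp add: algebra_simps inner_commute)
    hence ee': "e \<bullet> e' = 0" using \<mu>pos \<mu>'pos by simp
    have "A *v e' = - e'" using Be' by (simp add: B_def R_def ee')
    hence "e' \<bullet> (A *v y) = - (e' \<bullet> y)" for y by (rule orthogonal_transformation_inner_reversed[OF ortA])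
    hence "\<not> plane_nonreversing ((*v) A) v"
      using orthogonal_transformation_inner_reversed[OF ortA Ae]
      by (intro not_plane_nonreversing[where B = "(*v) A" and v = v, OF ne ne' ee' ei]) (simp_all add: power2_eq_square)
    thus False using nonrev by contradiction
  qed
qed

lemma rotation_fixes_configuration:
  fixes A :: "real^'d^'d" and v :: "'n::finite \<Rightarrow> real^'d"
  assumes rotA: "rotation_matrix A" and mpos: "\<And>j. m j > 0"
    and saAI: "\<And>x y. (A *v inertia m v x) \<bullet> y = x \<bullet> (A *v inertia m v y)"
    and nonrev: "plane_nonreversing ((*v) A) v"
  shows "A *v v j = v j"
proof -
  have ortA: "orthogonal_transformation ((*v) A)"
    using rotA by (simp add: rotation_matrix_def orthogonal_transformation_matrix)
  from orthogonal_psd_selfadjoint_product_cases[OF ortA linear_inertia inertia_selfadjoint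
      inertia_psd[OF mpos] saAI]
  show ?thesis
  proof
    assume "\<forall>x. A *v inertia m v x = inertia m v x"
    thus ?thesis by (intro orthogonal_transformation_fixing_inertia[where m = m and v = v, OF ortA mpos]) blast
  next
    assume "\<exists>e \<mu>. norm e = 1 \<and> \<mu> > 0 \<and> A *v e = - e \<and> inertia m v e = \<mu> *\<^sub>R e"
    then obtain e \<mu> where "norm e = 1" "\<mu> > 0" "A *v e = - e" "inertia m v e = \<mu> *\<^sub>R e" by blast
    with rotation_no_reversed_inertia_axis[OF rotA mpos saAI nonrev] show ?thesis by blast
  qed
qed

lemma smooth_on_has_derivative_egrad:
  fixes U :: "(real^'d)^'n \<Rightarrow> real"
  assumes sm: "smooth_on Xset U" and qX: "q \<in> Xset"
  shows "(U has_derivative (\<lambda>h. egrad U q \<bullet> h)) (at q)"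
proof -
  obtain G :: "((real^'d)^'n) list \<Rightarrow> (real^'d)^'n \<Rightarrow> real" where op: "open (Xset :: ((real^'d)^'n) set)"
    and G0: "\<forall>x\<in>Xset. G [] x = U x"
    and GD: "\<forall>vs. \<forall>x\<in>Xset. (G vs has_derivative (\<lambda>h. G (h # vs) x)) (at x)"
    using sm unfolding smooth_on_def by blast
  define D where "D h = G [h] q" for h
  have "(G [] has_derivative D) (at q)" using GD qX unfolding D_def by blast
  hence dU: "(U has_derivative D) (at q)"
    by (rule has_derivative_transform_within_open[OF _ op qX]) (use G0 in auto)
  have lD: "linear D" using has_derivative_bounded_linear[OF dU] bounded_linear.linear by blast
  define g where "g = (\<Sum>b\<in>Basis. D b *\<^sub>R b)"
  have "D h = g \<bullet> h" for h
  proof -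
    have "D h = D (\<Sum>b\<in>Basis. (h \<bullet> b) *\<^sub>R b)" by (simp add: euclidean_representation)
    also have "\<dots> = (\<Sum>b\<in>Basis. (h \<bullet> b) * D b)" using lD by (simp add: linear_sum linear_scale)
    also have "\<dots> = g \<bullet> h" by (simp add: g_def inner_sum_left inner_commute[of h] mult.commute)
    finally show ?thesis .
  qed
  hence dg: "(U has_derivative (\<lambda>h. g \<bullet> h)) (at q)" using dU by (metis ext)
  have "egrad U q = g"
    unfolding egrad_def
  proof (rule the_equality)
    fix g' assume "(U has_derivative (\<lambda>h. g' \<bullet> h)) (at q)"
    hence "(\<lambda>h. g' \<bullet> h) = (\<lambda>h. g \<bullet> h)" using has_derivative_unique dg by blast
    thus "g' = g" by (metis vector_eq_rdot)
  qed (rule dg)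
  thus ?thesis using dg by simp
qed

definition coord_rotation :: "'d \<Rightarrow> 'd \<Rightarrow> real \<Rightarrow> real^'d \<Rightarrow> real^'d" where
  "coord_rotation a b t x = (\<chi> k. if k = a then cos t * x $ a - sin t * x $ b
                          else if k = b then sin t * x $ a + cos t * x $ b else x $ k)"

lemma sum_remove_two:
  fixes f :: "'a \<Rightarrow> 'b::comm_monoid_add"
  assumes "finite A" "a \<in> A" "b \<in> A" "a \<noteq> b"
  shows "sum f A = f a + f b + sum f (A - {a, b})"
proof -
  have "sum f A = f a + sum f (A - {a})" using assms by (simp add: sum.remove)
  also have "sum f (A - {a}) = f b + sum f (A - {a} - {b})" using assms by (intro sum.remove) auto
  finally show ?thesis by (simp add: Diff_insert2[symmetric] insert_commute add.assoc)
qed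

lemma norm_coord_rotation:
  assumes ab: "a \<noteq> b"
  shows "norm (coord_rotation a b t z) = norm z"
proof -
  let ?r = "coord_rotation a b t z"
  have "?r $ a * ?r $ a + ?r $ b * ?r $ b = (cos t * cos t + sin t * sin t) * (z $ a * z $ a + z $ b * z $ b)"
    using ab by (simp add: coord_rotation_def algebra_simps del: sin_cos_squared_add3)
  hence "?r $ a * ?r $ a + ?r $ b * ?r $ b = z $ a * z $ a + z $ b * z $ b" by simp
  moreover have "(\<Sum>k\<in>UNIV - {a, b}. ?r $ k * ?r $ k) = (\<Sum>k\<in>UNIV - {a, b}. z $ k * z $ k)"
    by (rule sum.cong) (auto simp: coord_rotation_def)
  ultimately have "?r \<bullet> ?r = z \<bullet> z"
    using ab by (simp add: inner_vec_def sum_remove_two[of UNIV a b])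
  thus ?thesis by (simp add: norm_eq_sqrt_inner)
qed

lemma dist_coord_rotation:
  assumes "a \<noteq> b"
  shows "dist (coord_rotation a b t x) (coord_rotation a b t y) = dist x y"
proof -
  have "coord_rotation a b t x - coord_rotation a b t y = coord_rotation a b t (x - y)"
    by (simp add: vec_eq_iff coord_rotation_def algebra_simps)
  thus ?thesis using norm_coord_rotation[OF assms] by (simp add: dist_norm)
qed

text \<open>The vanishing angular momentum of \<open>\<nabla>U\<close>: differentiate \<open>U\<close> along the rotations in
  the coordinate plane of \<open>a, b\<close>.\<close>
lemma egrad_moment_symmetric:
  fixes U :: "(real^'d)^'n \<Rightarrow> real" and a b :: 'd
  assumes sm: "smooth_on Xset U" and qX: "q \<in> Xset"
    and isom: "\<forall>g :: real^'d \<Rightarrow> real^'d. (\<forall>x y. dist (g x) (g y) = dist x y) \<longrightarrow>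
                     (\<forall>q\<in>Xset. U (\<chi> j. g (q $ j)) = U q)"
  shows "(\<Sum>j\<in>UNIV. egrad U q $ j $ b * q $ j $ a) = (\<Sum>j\<in>UNIV. egrad U q $ j $ a * q $ j $ b)"
proof (cases "a = b")
  case False
  define \<Xi> :: "(real^'d)^'n"
    where "\<Xi> = (\<chi> j. \<chi> k. if k = a then - q $ j $ b else if k = b then q $ j $ a else 0)"
  define P :: "(real^'d)^'n"
    where "P = (\<chi> j. \<chi> k. if k = a then q $ j $ a else if k = b then q $ j $ b else 0)"
  define \<gamma> where "\<gamma> t = q + (cos t - 1) *\<^sub>R P + sin t *\<^sub>R \<Xi>" for t :: real
  have "\<gamma> t = (\<chi> j. coord_rotation a b t (q $ j))" for t
    using False by (simp add: vec_eq_iff \<gamma>_def P_def \<Xi>_def coord_rotation_def algebra_simps)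
  hence const: "U \<circ> \<gamma> = (\<lambda>t. U q)"
    using isom qX dist_coord_rotation[OF False] by (simp add: fun_eq_iff)
  have "(\<gamma> has_vector_derivative (0 + (- sin 0) *\<^sub>R P + cos 0 *\<^sub>R \<Xi>)) (at 0)"
    unfolding \<gamma>_def[abs_def] by (intro derivative_eq_intros) auto
  hence d\<gamma>: "(\<gamma> has_derivative (\<lambda>s. s *\<^sub>R \<Xi>)) (at 0)" by (simp add: has_vector_derivative_def)
  have dU: "(U has_derivative (\<lambda>h. egrad U q \<bullet> h)) (at (\<gamma> 0))"
    using smooth_on_has_derivative_egrad[OF sm qX] by (simp add: \<gamma>_def)
  from diff_chain_at[OF d\<gamma> dU]
  have "((\<lambda>t. U q) has_derivative (\<lambda>s. egrad U q \<bullet> (s *\<^sub>R \<Xi>))) (at 0)"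
    unfolding const by (simp add: comp_def)
  hence "(\<lambda>s. egrad U q \<bullet> (s *\<^sub>R \<Xi>)) = (\<lambda>s. 0)"
    using has_derivative_const has_derivative_unique by blast
  hence "egrad U q \<bullet> \<Xi> = 0" by (metis scaleR_one)
  moreover have "egrad U q $ j \<bullet> \<Xi> $ j = egrad U q $ j $ b * q $ j $ a - egrad U q $ j $ a * q $ j $ b" for j
  proof -
    have "(\<Sum>k\<in>UNIV - {a, b}. egrad U q $ j $ k * \<Xi> $ j $ k) = 0"
      by (rule sum.neutral) (auto simp: \<Xi>_def)
    thus ?thesis using False by (simp add: inner_vec_def sum_remove_two[of UNIV a b] \<Xi>_def)
  qed
  ultimately show ?thesis by (simp add: inner_vec_def sum_subtractf)
qed simp

lemma sum_products_inner_expand: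
  fixes v w :: "'n::finite \<Rightarrow> real^'d"
  shows "(\<Sum>j\<in>UNIV. m j * (v j \<bullet> x) * (w j \<bullet> y))
       = (\<Sum>a\<in>UNIV. \<Sum>b\<in>UNIV. x $ a * y $ b * (\<Sum>j\<in>UNIV. m j * v j $ a * w j $ b))"
proof -
  have "(\<Sum>j\<in>UNIV. m j * (v j \<bullet> x) * (w j \<bullet> y))
      = (\<Sum>j\<in>UNIV. \<Sum>a\<in>UNIV. \<Sum>b\<in>UNIV. x $ a * y $ b * (m j * v j $ a * w j $ b))"
    by (simp add: inner_vec_def sum_distrib_left sum_distrib_right mult_ac)
  also have "\<dots> = (\<Sum>a\<in>UNIV. \<Sum>j\<in>UNIV. \<Sum>b\<in>UNIV. x $ a * y $ b * (m j * v j $ a * w j $ b))"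
    by (rule sum.swap)
  also have "\<dots> = (\<Sum>a\<in>UNIV. \<Sum>b\<in>UNIV. \<Sum>j\<in>UNIV. x $ a * y $ b * (m j * v j $ a * w j $ b))"
    by (rule sum.cong[OF refl], rule sum.swap)
  finally show ?thesis by (simp add: sum_distrib_left)
qed

lemma sum_products_inner_symmetric:
  fixes v w :: "'n::finite \<Rightarrow> real^'d"
  assumes "\<And>a b. (\<Sum>j\<in>UNIV. m j * w j $ b * v j $ a) = (\<Sum>j\<in>UNIV. m j * w j $ a * v j $ b)"
  shows "(\<Sum>j\<in>UNIV. m j * (v j \<bullet> x) * (w j \<bullet> y)) = (\<Sum>j\<in>UNIV. m j * (v j \<bullet> y) * (w j \<bullet> x))"
proof -
  define C where "C a b = (\<Sum>j\<in>UNIV. m j * v j $ a * w j $ b)" for a b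
  have C_sym: "C a b = C b a" for a b using assms[of a b] by (simp add: C_def mult_ac)
  have "(\<Sum>j\<in>UNIV. m j * (v j \<bullet> y) * (w j \<bullet> x)) = (\<Sum>a\<in>UNIV. \<Sum>b\<in>UNIV. y $ a * x $ b * C a b)"
    by (simp add: sum_products_inner_expand C_def)
  also have "\<dots> = (\<Sum>b\<in>UNIV. \<Sum>a\<in>UNIV. y $ a * x $ b * C a b)" by (rule sum.swap)
  also have "\<dots> = (\<Sum>b\<in>UNIV. \<Sum>a\<in>UNIV. x $ b * y $ a * C b a)" by (simp add: C_sym mult_ac)
  also have "\<dots> = (\<Sum>j\<in>UNIV. m j * (v j \<bullet> x) * (w j \<bullet> y))"
    by (simp add: sum_products_inner_expand C_def)
  finally show ?thesis by simp
qed

lemma inner_matrix_inertia: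
  fixes A :: "real^'d^'e" and v :: "'n::finite \<Rightarrow> real^'d"
  shows "(A *v inertia m v x) \<bullet> y = (\<Sum>j\<in>UNIV. m j * (v j \<bullet> x) * ((A *v v j) \<bullet> y))"
proof -
  have "linear ((*v) A)" by (rule matrix_vector_mul_linear)
  thus ?thesis by (simp add: inertia_def linear_sum matrix_vector_mult_scaleR inner_sum_left)
qed

lemma egrad_of_Fmap_rotated:
  assumes mpos: "\<forall>j. m j > 0" and qS: "q \<in> Sset m" and oA: "orthogonal_matrix A"
    and FA: "Fmap m U q = act A q"
  obtains c :: real where "c \<noteq> 0" "\<And>j. egrad U q $ j = (c * m j) *\<^sub>R (A *v q $ j)"
proof -
  define c where "c = norm_M m (grad_M m U q)"
  have FAj: "Fmap m U q $ j = A *v q $ j" for j by (simp add: FA act_def)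
  have "c \<noteq> 0"
  proof
    assume "c = 0"
    hence "Fmap m U q = 0" by (simp add: Fmap_def c_def)
    hence "A *v q $ j = 0" for j using FAj[of j] by simp
    moreover have "orthogonal_transformation ((*v) A)"
      using oA by (simp add: orthogonal_transformation_matrix)
    ultimately have "q $ j = 0" for j by (metis norm_eq_zero orthogonal_transformation_norm)
    hence "norm_M m q = 0" by (simp add: norm_M_def inner_M_def)
    thus False using qS by (simp add: Sset_def)
  qed
  hence "grad_M m U q = (- c) *\<^sub>R Fmap m U q" by (simp add: Fmap_def c_def)
  moreover have "egrad U q $ j = m j *\<^sub>R grad_M m U q $ j" for j
    using mpos by (simp add: grad_M_def less_imp_neq[symmetric])
  ultimately have "egrad U q $ j = (- c * m j) *\<^sub>R (A *v q $ j)" for j by (simp add: FAj)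
  thus ?thesis using that \<open>c \<noteq> 0\<close> by (metis neg_equal_0_iff_equal)
qed

lemma Fmap_rotated_inertia_selfadjoint:
  fixes U :: "(real^'d)^'n::finite \<Rightarrow> real"
  assumes sm: "smooth_on Xset U"
    and isom: "\<forall>g :: real^'d \<Rightarrow> real^'d. (\<forall>x y. dist (g x) (g y) = dist x y) \<longrightarrow>
                     (\<forall>q\<in>Xset. U (\<chi> j. g (q $ j)) = U q)"
    and mpos: "\<forall>j. m j > 0" and qS: "q \<in> Sset m" and oA: "orthogonal_matrix A"
    and FA: "Fmap m U q = act A q"
  shows "(A *v inertia m (($) q) x) \<bullet> y = x \<bullet> (A *v inertia m (($) q) y)"
proof -
  obtain c where c0: "c \<noteq> 0" and egrad: "\<And>j. egrad U q $ j = (c * m j) *\<^sub>R (A *v q $ j)"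
    using egrad_of_Fmap_rotated[OF mpos qS oA FA] by blast
  have qX: "q \<in> Xset" using qS by (simp add: Sset_def)
  have "c * (\<Sum>j\<in>UNIV. m j * (A *v q $ j) $ b * q $ j $ a)
      = c * (\<Sum>j\<in>UNIV. m j * (A *v q $ j) $ a * q $ j $ b)" for a b
    using egrad_moment_symmetric[OF sm qX isom, of b a] by (simp add: egrad sum_distrib_left mult_ac)
  hence "(\<Sum>j\<in>UNIV. m j * (A *v q $ j) $ b * q $ j $ a)
      = (\<Sum>j\<in>UNIV. m j * (A *v q $ j) $ a * q $ j $ b)" for a b
    using c0 by simp
  from sum_products_inner_symmetric[where v = "($) q" and w = "\<lambda>j. A *v q $ j", OF this, of x y]
  show ?thesis by (simp add: inner_matrix_inertia inner_commute[of x])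
qed

lemma Fmap_rotated_plane_nonreversing:
  fixes q :: "(real^'d)^'n::finite"
  assumes Fcond: "\<forall>p. orth_proj2 p \<longrightarrow> (\<forall>q\<in>Sset m.
                  (\<exists>j. p (Fmap m U q $ j) \<bullet> p (q $ j) \<ge> 0) \<and>
                  ((\<exists>i. p (q $ i) \<noteq> 0) \<longrightarrow>
                     (\<exists>j. p (Fmap m U q $ j) \<bullet> p (q $ j) \<ge> 0 \<and> p (q $ j) \<noteq> 0)))"
    and qS: "q \<in> Sset m" and FA: "Fmap m U q = act A q"
  shows "plane_nonreversing ((*v) A) (($) q)"
  unfolding plane_nonreversing_def
proof (intro allI impI)
  fix e f :: "real^'d"
  assume "norm e = 1" "norm f = 1" "e \<bullet> f = 0"
  hence "orth_proj2 (plane_proj e f)" by (rule orth_proj2_plane_proj)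
  hence "(\<exists>i. plane_proj e f (q $ i) \<noteq> 0) \<longrightarrow>
      (\<exists>j. 0 \<le> plane_proj e f (Fmap m U q $ j) \<bullet> plane_proj e f (q $ j) \<and> plane_proj e f (q $ j) \<noteq> 0)"
    using Fcond qS by blast
  thus "(\<exists>i. plane_proj e f (q $ i) \<noteq> 0) \<Longrightarrow> \<exists>j. 0 \<le> plane_proj e f (A *v q $ j) \<bullet> plane_proj e f (q $ j)
      \<and> plane_proj e f (q $ j) \<noteq> 0"
    by (simp add: FA act_def)
qed

lemma orbit_SO_eq_imp_rotated:
  assumes "orbit_SO x = orbit_SO q"
  obtains A where "rotation_matrix A" "x = act A q"
proof -
  have "act (mat 1) x = x" by (simp add: act_def vec_eq_iff)
  hence "x \<in> orbit_SO q"
    using assms orthogonal_matrix_id unfolding orbit_SO_def SOd_def by force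
  thus ?thesis using that by (auto simp: orbit_SO_def SOd_def rotation_matrix_def)
qed

theorem mainTheorem5:
  fixes m :: "'n::finite \<Rightarrow> real"
    and U :: "(real^'d)^'n \<Rightarrow> real"
    and \<alpha> :: real
  assumes n2: "CARD('n) \<ge> 2"
    and mpos: "\<forall>j. m j > 0"
    and alpha_pos: "\<alpha> > 0"
    and smooth: "smooth_on Xset U"
    and homog: "\<forall>q\<in>Xset. \<forall>t::real. t > 0 \<longrightarrow> U (t *\<^sub>R q) = t powr (- \<alpha>) * U q"
    and isom_inv: "\<forall>g :: real^'d \<Rightarrow> real^'d. (\<forall>x y. dist (g x) (g y) = dist x y) \<longrightarrow>
                     (\<forall>q\<in>Xset. U (\<chi> j. g (q $ j)) = U q)"
    and Upos: "\<forall>q\<in>Xset. U q > 0"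
    and Fcond: "\<forall>p. orth_proj2 p \<longrightarrow> (\<forall>q\<in>Sset m.
                  (\<exists>j. p (Fmap m U q $ j) \<bullet> p (q $ j) \<ge> 0) \<and>
                  ((\<exists>i. p (q $ i) \<noteq> 0) \<longrightarrow>
                     (\<exists>j. p (Fmap m U q $ j) \<bullet> p (q $ j) \<ge> 0 \<and> p (q $ j) \<noteq> 0)))"
  shows "orbit_SO ` {q \<in> Sset m. Fmap m U q = q}
         = {orbit_SO q | q. q \<in> Sset m \<and> orbit_SO (Fmap m U q) = orbit_SO q}"
proof
  show "{orbit_SO q | q. q \<in> Sset m \<and> orbit_SO (Fmap m U q) = orbit_SO q}
        \<subseteq> orbit_SO ` {q \<in> Sset m. Fmap m U q = q}"
  proof clarify
    fix q assume qS: "q \<in> Sset m" and orb: "orbit_SO (Fmap m U q) = orbit_SO q"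
    obtain A where rotA: "rotation_matrix A" and FA: "Fmap m U q = act A q"
      by (rule orbit_SO_eq_imp_rotated[OF orb])
    have "A *v q $ j = q $ j" for j
    proof (rule rotation_fixes_configuration[OF rotA])
      show "\<And>j. m j > 0" using mpos by blast
      show "(A *v inertia m (($) q) x) \<bullet> y = x \<bullet> (A *v inertia m (($) q) y)" for x y
        using rotA by (intro Fmap_rotated_inertia_selfadjoint[OF smooth isom_inv mpos qS _ FA])
          (simp add: rotation_matrix_def)
      show "plane_nonreversing ((*v) A) (($) q)"
        by (rule Fmap_rotated_plane_nonreversing[OF Fcond qS FA])
    qed
    hence "Fmap m U q = q" by (simp add: FA act_def vec_eq_iff)
    thus "orbit_SO q \<in> orbit_SO ` {q \<in> Sset m. Fmap m U q = q}" using qS by blast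
  qed
qed auto

end
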